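(* Let $d\ge1$ and let $f(t)=1+\sum_{i=1}^{d}\binom{x_i}{i}t^{i}$ be a polynomial of degree $d$ with positive real coefficients, where $x_i\ge i-1$ are real numbers, and suppose $x_d\ge d$. If all roots of $f(t)$ are real, then $x_1\ge x_2\ge\cdots\ge x_d$.
   Context: For real $x$ and integer $k\ge0$, $\binom{x}{k}=\frac{x(x-1)\cdots(x-k+1)}{k!}$; for each $k\ge1$ and real $y>0$ there is a unique real $x\ge k-1$ with $\binom{x}{k}=y$. *)

theory Defs
  imports "HOL-Analysis.Analysis" "HOL-Computational_Algebra.Polynomial"
begin

definition binpoly :: "nat \<Rightarrow> (nat \<Rightarrow> real) \<Rightarrow> real poly" where
  "binpoly d x = 1 + (\<Sum>i=1..d. monom (x i gchoose i) i)"

end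

theory Submission
  imports Defs "HOL-Computational_Algebra.Fundamental_Theorem_Algebra"
begin

(* Newton's inequalities make the normalised coefficients b_k = a_k / (d choose k) of a
   real-rooted polynomial with positive coefficients log-concave, and since b_0 = 1 this gives
   Maclaurin's inequalities b_j^(1/j) <= b_i^(1/i) for i <= j.  For y >= d, however, the ratios
   (y choose k) / (d choose k) have increasing k-th roots.  So if x_j >= d and x_i < x_j with
   i < j, then b_i^(1/i) < ((x_j choose i) / (d choose i))^(1/i) <= b_j^(1/j), a contradiction.
   Taking j = d first gives x_i >= d for every i, and then the claim for all pairs. *)

definition real_rooted :: "complex poly \<Rightarrow> bool" where
  "real_rooted p \<longleftrightarrow> (\<forall>z. poly p z = 0 \<longrightarrow> z \<in> \<real>)"

lemma Im_mult_Im_inverse_diff_neg: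
  assumes "r \<in> \<real>" "Im z \<noteq> 0"
  shows "Im z * Im (1 / (z - r)) < 0"
proof -
  have "z \<noteq> r"
    using assms by (metis complex_is_Real_iff)
  have "Im z * Im (1 / (z - r)) = - ((Im z)\<^sup>2 / (cmod (z - r))\<^sup>2)"
    using assms(1) by (simp add: Im_divide' complex_is_Real_iff power2_eq_square)
  also have "\<dots> < 0"
    using \<open>z \<noteq> r\<close> assms(2) by simp
  finally show ?thesis .
qed

lemma real_rooted_Im_logderiv_neg:
  assumes "real_rooted p" "degree p \<noteq> 0" "Im z \<noteq> 0"
  shows "Im z * Im (poly (pderiv p) z / poly p z) < 0"
  using assms
proof (induction "degree p" arbitrary: p rule: less_induct)
  case less
  have "\<not> constant (poly p)"
    using less.prems(2) by (simp add: constant_degree)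
  then obtain r where r: "poly p r = 0"
    using fundamental_theorem_of_algebra by blast
  then obtain q where pq: "p = [:-r, 1:] * q"
    by (metis dvdE poly_eq_0_iff_dvd)
  have "r \<in> \<real>"
    using r less.prems(1) by (simp add: real_rooted_def)
  have "q \<noteq> 0"
    using pq less.prems(2) by auto
  then have "degree p = Suc (degree q)"
    unfolding pq by (subst degree_mult_eq) auto
  have q_real_rooted: "real_rooted q"
    using less.prems(1) by (auto simp: real_rooted_def pq)
  have "poly p z \<noteq> 0"
    using less.prems(1,3) by (auto simp: real_rooted_def complex_is_Real_iff)
  then have "z - r \<noteq> 0" "poly q z \<noteq> 0"
    by (auto simp: pq)
  have deriv_p: "poly (pderiv p) z = (z - r) * poly (pderiv q) z + poly q z"
    unfolding pq pderiv_mult by (simp add: pderiv_pCons algebra_simps)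
  have p_z: "poly p z = (z - r) * poly q z"
    by (simp add: pq algebra_simps)
  have logderiv: "poly (pderiv p) z / poly p z = 1 / (z - r) + poly (pderiv q) z / poly q z"
    unfolding deriv_p p_z using \<open>z - r \<noteq> 0\<close> \<open>poly q z \<noteq> 0\<close> by (simp add: field_simps)
  have "Im z * Im (poly (pderiv q) z / poly q z) \<le> 0"
  proof (cases "degree q = 0")
    case True
    then show ?thesis by (auto elim: degree_eq_zeroE)
  next
    case False
    then show ?thesis
      using less.hyps[of q] q_real_rooted less.prems(3) \<open>degree p = Suc (degree q)\<close> by fastforce
  qed
  then show ?case
    using Im_mult_Im_inverse_diff_neg[OF \<open>r \<in> \<real>\<close> less.prems(3)] by (simp add: logderiv algebra_simps)
qed

lemma real_rooted_pderiv:
  assumes "real_rooted p" "degree p \<noteq> 0"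
  shows "real_rooted (pderiv p)"
  unfolding real_rooted_def
proof (intro allI impI)
  fix z assume "poly (pderiv p) z = 0"
  then show "z \<in> \<real>"
    using real_rooted_Im_logderiv_neg[OF assms, of z] by (auto simp: complex_is_Real_iff)
qed

lemma real_rooted_higher_pderiv:
  assumes "real_rooted p" "m < degree p"
  shows "real_rooted ((pderiv ^^ m) p)"
  using assms(2)
proof (induction m)
  case (Suc m)
  then show ?case
    using real_rooted_pderiv[of "(pderiv ^^ m) p"] by (simp add: degree_higher_pderiv)
qed (use assms(1) in simp)

lemma real_rooted_reflect_poly:
  assumes "real_rooted p" "coeff p 0 \<noteq> 0"
  shows "real_rooted (reflect_poly p)"
  unfolding real_rooted_def
proof (intro allI impI)
  fix z assume z: "poly (reflect_poly p) z = 0"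
  have "z \<noteq> 0"
    using z assms(2) by auto
  then have "poly p (inverse z) = 0"
    using z by (simp add: poly_reflect_poly_nz)
  then have "inverse z \<in> \<real>"
    using assms(1) unfolding real_rooted_def by blast
  then show "z \<in> \<real>"
    by (metis Reals_inverse inverse_inverse_eq)
qed

lemma real_rooted_quadratic_discriminant:
  fixes q :: "complex poly" and c :: "nat \<Rightarrow> real"
  assumes "real_rooted q" "degree q = 2" "\<And>j. coeff q j = of_real (c j)"
  shows "4 * c 0 * c 2 \<le> (c 1)\<^sup>2"
proof (rule ccontr)
  assume "\<not> 4 * c 0 * c 2 \<le> (c 1)\<^sup>2"
  define s where "s = sqrt (4 * c 0 * c 2 - (c 1)\<^sup>2)"
  have "s > 0" "s\<^sup>2 = 4 * c 0 * c 2 - (c 1)\<^sup>2"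
    using \<open>\<not> 4 * c 0 * c 2 \<le> (c 1)\<^sup>2\<close> by (simp_all add: s_def)
  have "coeff q (degree q) \<noteq> 0"
    using assms(2) by (intro leading_coeff_neq_0) auto
  then have "c 2 \<noteq> 0"
    using assms(2,3) by simp
  define z where "z = Complex (- c 1 / (2 * c 2)) (s / (2 * c 2))"
  have "poly q z = of_real (c 0) + of_real (c 1) * z + of_real (c 2) * z\<^sup>2"
    using assms(2,3) by (simp add: poly_altdef numeral_2_eq_2 atMost_Suc)
  also have "\<dots> = 0"
  proof (rule complex_eqI)
    show "Re (of_real (c 0) + of_real (c 1) * z + of_real (c 2) * z\<^sup>2) = Re 0"
      using \<open>c 2 \<noteq> 0\<close> \<open>s\<^sup>2 = _\<close> by (simp add: z_def power2_eq_square field_simps) algebra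
    show "Im (of_real (c 0) + of_real (c 1) * z + of_real (c 2) * z\<^sup>2) = Im 0"
      using \<open>c 2 \<noteq> 0\<close> by (simp add: z_def power2_eq_square field_simps)
  qed
  finally have "z \<in> \<real>"
    using assms(1) by (simp add: real_rooted_def)
  then show False
    using \<open>s > 0\<close> \<open>c 2 \<noteq> 0\<close> by (simp add: z_def complex_is_Real_iff)
qed

lemma fact_mult_coeff_higher_pderiv:
  fixes p :: "'a::{comm_semiring_1,semiring_no_zero_divisors,semiring_char_0} poly"
  shows "fact n * coeff ((pderiv ^^ m) p) n = fact (n + m) * coeff p (n + m)"
  by (simp add: coeff_higher_pderiv pochhammer_fact pochhammer_product' mult_ac)

text \<open>Differentiating \<open>k\<close> times, reflecting and differentiating again until degree 2 leaves a
  real-rooted quadratic whose coefficients are three consecutive coefficients of \<open>p\<close>.\<close>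

lemma newton_inequality_fact:
  fixes p :: "real poly"
  assumes "real_rooted (map_poly of_real p)" "degree p = n" "k + 2 \<le> n" "coeff p k \<noteq> 0"
  shows "coeff p k * fact k * fact (n - k) * (coeff p (k + 2) * fact (k + 2) * fact (n - k - 2))
           \<le> (coeff p (k + 1) * fact (k + 1) * fact (n - k - 1))\<^sup>2"
proof -
  define m where "m = n - k - 2"
  have n: "n = k + m + 2"
    using assms(3) by (simp add: m_def)
  define P where "P = map_poly complex_of_real p"
  have coeff_P: "coeff P j = of_real (coeff p j)" for j
    by (simp add: P_def coeff_map_poly)
  define g where "g = (pderiv ^^ k) P"
  have "degree P = n"
    using assms(2) by (simp add: P_def degree_map_poly)
  have "degree g = m + 2"
    using \<open>degree P = n\<close> by (simp add: g_def degree_higher_pderiv n)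
  have coeff_g: "fact j * coeff g j = fact (j + k) * of_real (coeff p (j + k))" for j
    by (simp add: g_def fact_mult_coeff_higher_pderiv coeff_P)
  have "coeff g 0 \<noteq> 0"
    using coeff_g[of 0] assms(4) by simp
  define h where "h = reflect_poly g"
  have "degree h = m + 2"
    using \<open>degree g = m + 2\<close> \<open>coeff g 0 \<noteq> 0\<close> by (simp add: h_def)
  have "real_rooted h"
    unfolding h_def g_def
    using assms(1) \<open>degree P = n\<close> \<open>coeff g 0 \<noteq> 0\<close>
    by (intro real_rooted_reflect_poly real_rooted_higher_pderiv) (auto simp: g_def P_def n)
  define q where "q = (pderiv ^^ m) h"
  have "degree q = 2"
    using \<open>degree h = m + 2\<close> by (simp add: q_def degree_higher_pderiv)
  define c where "c j = (if j \<le> 2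
    then fact (j + m) * fact (2 - j + k) * coeff p (2 - j + k) / (fact j * fact (2 - j)) else 0)"
    for j
  have coeff_q: "coeff q j = of_real (c j)" for j
  proof (cases "j \<le> 2")
    case True
    have "fact j * coeff q j = fact (j + m) * coeff g (2 - j)"
      using True \<open>degree g = m + 2\<close>
      by (simp add: q_def fact_mult_coeff_higher_pderiv h_def coeff_reflect_poly)
    moreover have "coeff g (2 - j) = fact (2 - j + k) * of_real (coeff p (2 - j + k)) / fact (2 - j)"
      using coeff_g[of "2 - j"] by (simp add: field_simps)
    ultimately show ?thesis
      using True by (simp add: c_def field_simps)
  qed (simp add: c_def coeff_eq_0 \<open>degree q = 2\<close>)
  have "real_rooted q"
    using \<open>real_rooted h\<close> \<open>degree h = m + 2\<close> by (simp add: q_def real_rooted_higher_pderiv)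
  then have "4 * c 0 * c 2 \<le> (c 1)\<^sup>2"
    using \<open>degree q = 2\<close> coeff_q by (rule real_rooted_quadratic_discriminant)
  moreover have "c 0 = fact m * fact (k + 2) * coeff p (k + 2) / 2"
    "c 1 = fact (m + 1) * fact (k + 1) * coeff p (k + 1)"
    "c 2 = fact (m + 2) * fact k * coeff p k / 2"
    by (simp_all add: c_def add.commute)
  moreover have "n - k = m + 2" "n - k - 1 = m + 1" "n - k - 2 = m"
    by (simp_all add: n)
  ultimately show ?thesis
    by (simp add: mult_ac)
qed

lemma newton_inequality:
  fixes p :: "real poly"
  assumes "real_rooted (map_poly of_real p)" "degree p = n" "k + 2 \<le> n" "coeff p k \<noteq> 0"
  shows "coeff p k / (n choose k) * (coeff p (k + 2) / (n choose (k + 2)))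
           \<le> (coeff p (k + 1) / (n choose (k + 1)))\<^sup>2"
proof -
  have normalized: "coeff p j / (n choose j) = coeff p j * fact j * fact (n - j) / fact n"
    if "j \<le> n" for j
    using that by (simp add: binomial_fact)
  show ?thesis
    using newton_inequality_fact[OF assms] assms(3)
    by (simp add: normalized power_divide power2_eq_square divide_right_mono)
qed

lemma concave_seq_div_antimono:
  fixes L :: "nat \<Rightarrow> real"
  assumes "L 0 = 0" "\<And>k. k + 2 \<le> n \<Longrightarrow> L k + L (k + 2) \<le> 2 * L (k + 1)"
    and "1 \<le> i" "i \<le> j" "j \<le> n"
  shows "L j / j \<le> L i / i"
proof -
  have cross: "real k * L (k + 1) \<le> real (k + 1) * L k" if "k + 1 \<le> n" for k
    using that
  proof (induction k)
    case (Suc k)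
    then have "real (k + 1) * (L k + L (k + 2)) \<le> real (k + 1) * (2 * L (k + 1))"
      using assms(2)[of k] by (intro mult_left_mono) auto
    with Suc show ?case by (simp add: algebra_simps)
  qed (simp add: assms(1))
  from assms(4,5) show ?thesis
  proof (induction j rule: dec_induct)
    case (step k)
    then have "L (k + 1) / (k + 1) \<le> L k / k"
      using cross[of k] assms(3) by (simp add: divide_simps mult.commute)
    with step show ?case by simp
  qed simp
qed

lemma maclaurin_inequality:
  fixes b :: "nat \<Rightarrow> real"
  assumes "b 0 = 1" "\<And>j. j \<le> n \<Longrightarrow> 0 < b j"
    and "\<And>k. k + 2 \<le> n \<Longrightarrow> b k * b (k + 2) \<le> (b (k + 1))\<^sup>2"
    and "1 \<le> i" "i \<le> j" "j \<le> n"
  shows "b j ^ i \<le> b i ^ j"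
proof -
  have "ln (b j) / j \<le> ln (b i) / i"
  proof (rule concave_seq_div_antimono[where L = "\<lambda>k. ln (b k)"])
    show "ln (b k) + ln (b (k + 2)) \<le> 2 * ln (b (k + 1))" if "k + 2 \<le> n" for k
    proof -
      have pos: "0 < b k" "0 < b (k + 1)" "0 < b (k + 2)"
        using assms(2) that by auto
      then have "ln (b k * b (k + 2)) \<le> ln ((b (k + 1))\<^sup>2)"
        using assms(3) that by (subst ln_le_cancel_iff) auto
      then show ?thesis
        using pos by (simp add: ln_mult ln_realpow)
    qed
  qed (use assms in auto)
  then have "ln (b j ^ i) \<le> ln (b i ^ j)"
    using assms(2,4,5,6) by (simp add: ln_realpow divide_simps mult.commute)
  then show ?thesis
    using assms(2,4,5,6) by simp
qed

lemma gbinomial_Suc_eq: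
  fixes a :: "'a::field_char_0"
  shows "a gchoose Suc k = (a gchoose k) * (a - of_nat k) / of_nat (Suc k)"
  by (simp add: gbinomial_prod_rev field_simps)

lemma gbinomial_pos:
  fixes y :: real
  assumes "real k - 1 < y"
  shows "0 < y gchoose k"
  unfolding gbinomial_prod_rev using assms by (auto intro!: prod_pos divide_pos_pos)

lemma gbinomial_strict_mono:
  fixes u v :: real
  assumes "1 \<le> k" "real k - 1 \<le> u" "u < v"
  shows "u gchoose k < v gchoose k"
proof -
  have "(\<Prod>i = 0..<k. u - i) < (\<Prod>i = 0..<k. v - i)"
    by (rule prod_mono_strict[of 0]) (use assms in auto)
  then show ?thesis
    by (simp add: gbinomial_prod_rev divide_strict_right_mono)
qed

text \<open>For \<open>y \<ge> n\<close> the ratios \<open>c k = (y gchoose k) / (n gchoose k)\<close> grow by the factors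
  \<open>(y - k) / (n - k)\<close>, which increase with \<open>k\<close>; so \<open>1 / c\<close> is log-concave and Maclaurin's
  inequality applies to it.\<close>

lemma gbinomial_ratio_power_le:
  fixes y :: real
  assumes "real n \<le> y" "1 \<le> i" "i \<le> j" "j \<le> n"
  shows "((y gchoose i) / (real n gchoose i)) ^ j \<le> ((y gchoose j) / (real n gchoose j)) ^ i"
proof -
  define c where "c k = (y gchoose k) / (real n gchoose k)" for k
  define r where "r k = (y - k) / (real n - k)" for k :: nat
  have c_pos: "0 < c k" if "k \<le> n" for k
    using that assms(1) by (simp add: c_def gbinomial_pos)
  have c_Suc: "c (k + 1) = c k * r k" if "k < n" for k
    using that c_pos[of k] by (simp add: c_def r_def gbinomial_Suc_eq)
  have "(1 / c j) ^ i \<le> (1 / c i) ^ j"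
  proof (rule maclaurin_inequality[where b = "\<lambda>k. 1 / c k"])
    show "1 / c k * (1 / c (k + 2)) \<le> (1 / c (k + 1))\<^sup>2" if "k + 2 \<le> n" for k
    proof -
      have "0 \<le> r k" "r k \<le> r (k + 1)"
        using that assms(1) by (auto simp: r_def divide_simps algebra_simps)
      then have "c k * (c k * r k * r k) \<le> c k * (c k * r k * r (k + 1))"
        using c_pos[of k] that by (intro mult_left_mono) auto
      then have "(c (k + 1))\<^sup>2 \<le> c k * c (k + 2)"
        using that c_Suc[of k] c_Suc[of "k + 1"] by (simp add: power2_eq_square mult_ac)
      then have "1 / (c k * c (k + 2)) \<le> 1 / (c (k + 1))\<^sup>2"
        by (rule divide_left_mono) (use that c_pos[of k] c_pos[of "k + 1"] c_pos[of "k + 2"] in auto)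
      then show ?thesis
        by (simp add: power_one_over)
    qed
  qed (use assms c_pos in \<open>auto simp: c_def[of 0]\<close>)
  moreover have "0 < c i ^ j" "0 < c j ^ i"
    using assms c_pos by auto
  ultimately have "c i ^ j \<le> c j ^ i"
    by (simp add: power_one_over field_simps)
  then show ?thesis
    by (simp add: c_def)
qed

lemma coeff_binpoly:
  "coeff (binpoly d x) j = (if j = 0 then 1 else if j \<le> d then x j gchoose j else 0)"
  by (auto simp: binpoly_def coeff_sum)

lemma degree_binpoly:
  assumes "x d gchoose d \<noteq> 0"
  shows "degree (binpoly d x) = d"
proof (rule antisym)
  show "degree (binpoly d x) \<le> d"
    by (rule degree_le) (simp add: coeff_binpoly)
  show "d \<le> degree (binpoly d x)"
    by (rule le_degree) (use assms in \<open>simp add: coeff_binpoly\<close>)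
qed

lemma binpoly_maclaurin:
  assumes "real_rooted (map_poly of_real (binpoly d x))"
    and "\<And>i. 1 \<le> i \<Longrightarrow> i \<le> d \<Longrightarrow> 0 < x i gchoose i"
    and "1 \<le> i" "i \<le> j" "j \<le> d"
  shows "((x j gchoose j) / (real d gchoose j)) ^ i \<le> ((x i gchoose i) / (real d gchoose i)) ^ j"
proof -
  define b where "b j = (x j gchoose j) / (real d gchoose j)" for j
  have b_pos: "0 < b j" if "j \<le> d" for j
    using that assms(2)[of j] by (cases "j = 0") (simp_all add: b_def gbinomial_pos)
  have degree: "degree (binpoly d x) = d"
    using assms(2) by (cases "d = 0") (simp_all add: degree_binpoly less_imp_neq[symmetric])
  have "b k * b (k + 2) \<le> (b (k + 1))\<^sup>2" if "k + 2 \<le> d" for k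
    using newton_inequality[OF assms(1) degree that] that assms(2)[of k]
    by (cases "k = 0") (simp_all add: b_def coeff_binpoly binomial_gbinomial)
  then show ?thesis
    using maclaurin_inequality[of b d i j] b_pos assms(3-5) by (simp add: b_def)
qed

theorem mainTheorem3:
  fixes d :: nat and x :: "nat \<Rightarrow> real"
  assumes "d \<ge> 1"
    and "\<And>i. 1 \<le> i \<Longrightarrow> i \<le> d \<Longrightarrow> x i \<ge> real i - 1"
    and "\<And>i. 1 \<le> i \<Longrightarrow> i \<le> d \<Longrightarrow> (x i gchoose i) > 0"
    and "x d \<ge> real d"
    and "\<And>z::complex. poly (map_poly complex_of_real (binpoly d x)) z = 0 \<Longrightarrow> z \<in> \<real>"
  shows "\<forall>i j. 1 \<le> i \<longrightarrow> i \<le> j \<longrightarrow> j \<le> d \<longrightarrow> x j \<le> x i"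
proof -
  define b where "b j = (x j gchoose j) / (real d gchoose j)" for j
  have "real_rooted (map_poly of_real (binpoly d x))"
    using assms(5) by (simp add: real_rooted_def)
  then have power_le: "b j ^ i \<le> b i ^ j" if "1 \<le> i" "i \<le> j" "j \<le> d" for i j
    using binpoly_maclaurin assms(3) that by (simp add: b_def)
  have above: "x j \<le> x i" if ij: "1 \<le> i" "i \<le> j" "j \<le> d" and "real d \<le> x j" for i j
  proof (rule ccontr)
    assume "\<not> x j \<le> x i"
    then have "b i < (x j gchoose i) / (real d gchoose i)"
      using ij assms(2)[of i] gbinomial_strict_mono[of i "x i" "x j"] gbinomial_pos[of i "real d"]
      by (simp add: b_def divide_strict_right_mono)
    then have "b i ^ j < ((x j gchoose i) / (real d gchoose i)) ^ j"
      using ij assms(3)[of i] gbinomial_pos[of i "real d"] by (intro power_strict_mono) (auto simp: b_def)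
    also have "\<dots> \<le> b j ^ i"
      using gbinomial_ratio_power_le[OF \<open>real d \<le> x j\<close> ij] by (simp add: b_def)
    also have "\<dots> \<le> b i ^ j"
      using power_le[OF ij] .
    finally show False by simp
  qed
  have "real d \<le> x j" if "1 \<le> j" "j \<le> d" for j
    using above[of j d] assms(4) that by simp
  then show ?thesis
    using above by (meson order_trans)
qed

end
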